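(* Let $k,t\geq 2$ be integers and let $n$ be an integer with $2t\leq n\leq 3t$. Then $A_k(n,0^t)\leq \beta_k(t)^n$, where $\beta_k(t)=k-(k-1)k^{-t-1}$.
   Context: Words are over $\Sigma_k=\{0,1,\ldots,k-1\}$, and $0^t$ is the word consisting of $t$ zeros. $A_k(m,v)$ denotes the number of words of length $m$ over $\Sigma_k$ that do not contain $v$ as a factor. *)

theory Defs
  imports Complex_Main "HOL-Library.Sublist"
begin

text \<open>Words of length m over the alphabet {0,...,k-1}, represented as lists of naturals.
  A word v is a factor of w iff v is a contiguous sublist (infix) of w.\<close>

definition words :: "nat \<Rightarrow> nat \<Rightarrow> nat list set" where
  "words k m = {w. length w = m \<and> set w \<subseteq> {0..<k}}"

definition avoid_count :: "nat \<Rightarrow> nat \<Rightarrow> nat list \<Rightarrow> nat" where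
  "avoid_count k m v = card {w \<in> words k m. \<not> sublist v w}"

definition beta :: "nat \<Rightarrow> nat \<Rightarrow> real" where
  "beta k t = real k - (real k - 1) * real k powi (- int t - 1)"

end

theory Submission
  imports Defs
begin

text \<open>
  For \<open>1 \<le> i \<le> n - t\<close> consider the words with \<open>0\<^sup>t\<close> at positions \<open>i, \<dots>, i + t - 1\<close>, a nonzero
  letter at position \<open>i - 1\<close> and, if \<open>i > t\<close>, another one at position \<open>i - 1 - t\<close>. As \<open>n \<le> 3t\<close>,
  for \<open>i < j\<close> one of the two nonzero positions of family \<open>j\<close> lies in the zero run of
  family \<open>i\<close>, so the families are disjoint. Counting them shows that at least
  \<open>n (k - 1) k ^ (n - t - 2)\<close> words contain \<open>0\<^sup>t\<close>, i.e. \<open>A\<^sub>k(n, 0\<^sup>t) \<le> k ^ n (1 + n x)\<close> with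
  \<open>x = - (k - 1) / k ^ (t + 2)\<close>; Bernoulli's inequality bounds this by \<open>(k (1 + x)) ^ n = \<beta>\<^sub>k(t) ^ n\<close>.
\<close>

lemma card_lists_nth_in:
  assumes "\<And>j. j < n \<Longrightarrow> finite (S j)"
  shows "card {w. length w = n \<and> (\<forall>j<n. w ! j \<in> S j)} = (\<Prod>j<n. card (S j))"
  using assms
proof (induction n arbitrary: S)
  case 0
  then show ?case by simp
next
  case (Suc n)
  let ?tails = "{xs. length xs = n \<and> (\<forall>j<n. xs ! j \<in> S (Suc j))}"
  have split: "{w. length w = Suc n \<and> (\<forall>j<Suc n. w ! j \<in> S j)} = (\<lambda>(a, xs). a # xs) ` (S 0 \<times> ?tails)"
  proof (intro set_eqI iffI)
    fix w assume "w \<in> {w. length w = Suc n \<and> (\<forall>j<Suc n. w ! j \<in> S j)}"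
    then show "w \<in> (\<lambda>(a, xs). a # xs) ` (S 0 \<times> ?tails)"
      by (cases w) (force simp: image_iff)+
  qed (auto simp: less_Suc_eq_0_disj)
  have "inj_on (\<lambda>(a, xs). a # xs) (S 0 \<times> ?tails)"
    by (auto simp: inj_on_def)
  then have "card {w. length w = Suc n \<and> (\<forall>j<Suc n. w ! j \<in> S j)} = card (S 0) * card ?tails"
    unfolding split by (simp add: card_image card_cartesian_product)
  also have "\<dots> = card (S 0) * (\<Prod>j<n. card (S (Suc j)))"
    using Suc.IH[of "\<lambda>j. S (Suc j)"] Suc.prems by simp
  also have "\<dots> = (\<Prod>j<Suc n. card (S j))"
    by (simp only: prod.lessThan_Suc_shift)
  finally show ?case .
qed

lemma card_words: "card (words k n) = k ^ n"
  using card_lists_length_eq[of "{0..<k}" n] by (simp add: words_def conj_commute)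

lemma finite_words: "finite (words k n)"
  using finite_lists_length_eq[of "{0..<k}" n] by (simp add: words_def conj_commute)

lemma avoid_count_eq: "avoid_count k n v = k ^ n - card {w \<in> words k n. sublist v w}"
proof -
  have "{w \<in> words k n. \<not> sublist v w} = words k n - {w \<in> words k n. sublist v w}"
    by auto
  then show ?thesis
    unfolding avoid_count_def by (simp add: card_Diff_subset finite_words card_words)
qed

definition constrained_words :: "nat \<Rightarrow> nat \<Rightarrow> nat set \<Rightarrow> nat set \<Rightarrow> nat list set" where
  "constrained_words k n Z N = {w \<in> words k n. (\<forall>j\<in>Z. w ! j = 0) \<and> (\<forall>j\<in>N. w ! j \<noteq> 0)}"

lemma card_constrained_words:
  assumes "0 < k" and "Z \<subseteq> {..<n}" and "N \<subseteq> {..<n}" and "Z \<inter> N = {}"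
  shows "card (constrained_words k n Z N) = (k - 1) ^ card N * k ^ (n - card Z - card N)"
proof -
  define S where "S j = (if j \<in> Z then {0} else if j \<in> N then {1..<k} else {0..<k})" for j
  have "constrained_words k n Z N = {w. length w = n \<and> (\<forall>j<n. w ! j \<in> S j)}"
    using assms by (auto simp: constrained_words_def words_def S_def set_conv_nth)
  then have "card (constrained_words k n Z N) = (\<Prod>j<n. card (S j))"
    by (simp add: card_lists_nth_in S_def)
  also have "\<dots> = (\<Prod>j<n. if j \<in> Z then 1 else if j \<in> N then k - 1 else k)"
    by (rule prod.cong) (auto simp: S_def)
  also have "\<dots> = (\<Prod>j\<in>{..<n} - Z. if j \<in> N then k - 1 else k)"
    by (simp add: prod.If_cases Diff_eq)
  also have "\<dots> = (k - 1) ^ card (({..<n} - Z) \<inter> N) * k ^ card ({..<n} - Z - N)"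
    by (simp add: prod.If_cases Diff_eq)
  also have "\<dots> = (k - 1) ^ card N * k ^ (n - card Z - card N)"
  proof -
    have "({..<n} - Z) \<inter> N = N" and "{..<n} - Z - N = {..<n} - (Z \<union> N)"
      using assms by auto
    moreover have "card ({..<n} - (Z \<union> N)) = n - card Z - card N"
      using assms by (simp add: card_Diff_subset card_Un_disjoint finite_subset)
    ultimately show ?thesis by simp
  qed
  finally show ?thesis .
qed

text \<open>The nonzero positions are written as \<open>j\<close> with \<open>j + 1 = i\<close> or \<open>j + t + 1 = i\<close>, so that
  they are absent when \<open>i - 1\<close> or \<open>i - 1 - t\<close> would be negative.\<close>

definition zero_run_words :: "nat \<Rightarrow> nat \<Rightarrow> nat \<Rightarrow> nat \<Rightarrow> nat list set" where
  "zero_run_words k n t i = constrained_words k n {i..<i + t} {j. Suc j = i \<or> Suc (j + t) = i}"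

lemma card_zero_run_words_early:
  assumes "0 < k" and "1 \<le> i" and "i \<le> t" and "i + t \<le> n"
  shows "card (zero_run_words k n t i) = (k - 1) * k ^ (n - t - 1)"
proof -
  have "{j. Suc j = i \<or> Suc (j + t) = i} = {i - 1}"
    using assms by auto
  moreover have "card (constrained_words k n {i..<i + t} {i - 1})
      = (k - 1) ^ card {i - 1} * k ^ (n - card {i..<i + t} - card {i - 1})"
    using assms by (intro card_constrained_words) auto
  ultimately show ?thesis
    by (simp add: zero_run_words_def)
qed

lemma card_zero_run_words_late:
  assumes "0 < k" and "0 < t" and "t < i" and "i + t \<le> n"
  shows "card (zero_run_words k n t i) = (k - 1) ^ 2 * k ^ (n - t - 2)"
proof -
  have "{j. Suc j = i \<or> Suc (j + t) = i} = {i - 1, i - 1 - t}" and "card {i - 1, i - 1 - t} = 2"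
    using assms by auto
  moreover have "card (constrained_words k n {i..<i + t} {i - 1, i - 1 - t})
      = (k - 1) ^ card {i - 1, i - 1 - t} * k ^ (n - card {i..<i + t} - card {i - 1, i - 1 - t})"
    using assms by (intro card_constrained_words) auto
  ultimately show ?thesis
    by (simp add: zero_run_words_def)
qed

lemma zero_run_words_subset:
  assumes "i + t \<le> n"
  shows "zero_run_words k n t i \<subseteq> {w \<in> words k n. sublist (replicate t 0) w}"
proof (intro subsetI CollectI conjI)
  fix w assume w: "w \<in> zero_run_words k n t i"
  then show "w \<in> words k n"
    by (simp add: zero_run_words_def constrained_words_def)
  have "take t (drop i w) = replicate t 0"
    using w assms by (intro nth_equalityI)
      (auto simp: zero_run_words_def constrained_words_def words_def)
  then show "sublist (replicate t 0) w"
    by (metis sublist_drop sublist_take sublist_order.order.trans)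
qed

lemma zero_run_words_disjoint:
  assumes "i < j" and "j \<le> i + 2 * t"
  shows "zero_run_words k n t i \<inter> zero_run_words k n t j = {}"
proof -
  obtain p where "p \<in> {i..<i + t}" and "Suc p = j \<or> Suc (p + t) = j"
  proof (cases "j - 1 < i + t")
    case True
    with assms show ?thesis by (intro that[of "j - 1"]) auto
  next
    case False
    with assms show ?thesis by (intro that[of "j - 1 - t"]) auto
  qed
  then show ?thesis
    by (auto simp: zero_run_words_def constrained_words_def)
qed

lemma sum_card_zero_run_words_le:
  assumes "n \<le> 3 * t"
  shows "(\<Sum>i\<in>{1..n - t}. card (zero_run_words k n t i))
    \<le> card {w \<in> words k n. sublist (replicate t 0) w}"
proof -
  let ?F = "zero_run_words k n t"
  have "(\<Sum>i\<in>{1..n - t}. card (?F i)) = card (\<Union>i\<in>{1..n - t}. ?F i)"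
  proof (rule card_UN_disjoint[symmetric])
    show "\<forall>i\<in>{1..n - t}. \<forall>j\<in>{1..n - t}. i \<noteq> j \<longrightarrow> ?F i \<inter> ?F j = {}"
    proof (intro ballI impI)
      fix i j assume "i \<in> {1..n - t}" "j \<in> {1..n - t}" "i \<noteq> j"
      then consider "i < j" "j \<le> i + 2 * t" | "j < i" "i \<le> j + 2 * t"
        using assms by fastforce
      then show "?F i \<inter> ?F j = {}"
        by cases (auto dest: zero_run_words_disjoint)
    qed
  qed (simp_all add: zero_run_words_def constrained_words_def finite_words)
  also have "\<dots> \<le> card {w \<in> words k n. sublist (replicate t 0) w}"
    by (intro card_mono UN_least zero_run_words_subset) (auto simp: finite_words)
  finally show ?thesis .
qed

lemma sum_card_zero_run_words:
  assumes "0 < k" and "0 < t" and "2 * t \<le> n"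
  shows "(\<Sum>i\<in>{1..n - t}. card (zero_run_words k n t i))
    = t * ((k - 1) * k ^ (n - t - 1)) + (n - 2 * t) * ((k - 1) ^ 2 * k ^ (n - t - 2))"
proof -
  have "{1..n - t} = {1..t} \<union> {t + 1..n - t}"
    using assms by auto
  then have "(\<Sum>i\<in>{1..n - t}. card (zero_run_words k n t i))
      = (\<Sum>i\<in>{1..t}. card (zero_run_words k n t i)) + (\<Sum>i\<in>{t + 1..n - t}. card (zero_run_words k n t i))"
    by (simp add: sum.union_disjoint)
  also have "\<dots> = (\<Sum>i\<in>{1..t}. (k - 1) * k ^ (n - t - 1)) + (\<Sum>i\<in>{t + 1..n - t}. (k - 1) ^ 2 * k ^ (n - t - 2))"
  proof (intro arg_cong2[where f = "(+)"] sum.cong refl)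
    fix i assume "i \<in> {1..t}"
    with assms show "card (zero_run_words k n t i) = (k - 1) * k ^ (n - t - 1)"
      by (intro card_zero_run_words_early) auto
  next
    fix i assume "i \<in> {t + 1..n - t}"
    with assms show "card (zero_run_words k n t i) = (k - 1) ^ 2 * k ^ (n - t - 2)"
      by (intro card_zero_run_words_late) auto
  qed
  also have "\<dots> = t * ((k - 1) * k ^ (n - t - 1)) + (n - 2 * t) * ((k - 1) ^ 2 * k ^ (n - t - 2))"
    by (simp add: mult_2)
  finally show ?thesis .
qed

lemma card_words_containing_zero_run_ge:
  assumes "2 \<le> k" and "2 \<le> t" and "2 * t \<le> n" and "n \<le> 3 * t"
  shows "n * (k - 1) * k ^ (n - t - 2) \<le> card {w \<in> words k n. sublist (replicate t 0) w}"
proof -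
  define p where "p = k ^ (n - t - 2)"
  have "n \<le> t * k + (n - 2 * t) * (k - 1)"
  proof -
    have "2 * t \<le> t * k"
      using assms by simp
    moreover have "(n - 2 * t) * 1 \<le> (n - 2 * t) * (k - 1)"
      using assms by (intro mult_le_mono2) simp
    ultimately show ?thesis
      using assms by linarith
  qed
  then have "n * (k - 1) * p \<le> (t * k + (n - 2 * t) * (k - 1)) * (k - 1) * p"
    by (intro mult_right_mono) simp_all
  also have "\<dots> = t * ((k - 1) * k ^ (n - t - 1)) + (n - 2 * t) * ((k - 1) ^ 2 * p)"
  proof -
    have "k ^ (n - t - 1) = k * p"
      using assms by (simp add: p_def flip: power_Suc)
    moreover have "(t * k + m * a) * a * p = t * (a * (k * p)) + m * (a ^ 2 * p)" for m a :: nat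
      by (simp add: algebra_simps power2_eq_square)
    ultimately show ?thesis
      by simp
  qed
  also have "\<dots> \<le> card {w \<in> words k n. sublist (replicate t 0) w}"
    using sum_card_zero_run_words[of k t n] sum_card_zero_run_words_le[of n t k] assms
    by (simp add: p_def)
  finally show ?thesis
    unfolding p_def .
qed

lemma beta_eq:
  assumes "0 < k"
  shows "beta k t = real k * (1 - (real k - 1) / real k ^ (t + 2))"
proof -
  have "real k powi (- int t - 1) = real k powi (- int (t + 1))"
    by (intro arg_cong[of _ _ "power_int (real k)"]) simp
  also have "\<dots> = inverse (real k ^ (t + 1))"
    by (simp only: power_int_minus power_int_of_nat)
  finally show ?thesis
    using assms by (simp add: beta_def field_simps)
qed

lemma power_minus_le_beta_power:
  assumes "0 < k" and "t + 2 \<le> n"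
  shows "real k ^ n - real n * (real k - 1) * real k ^ (n - t - 2) \<le> beta k t ^ n"
proof -
  define x where "x = - (real k - 1) / real k ^ (t + 2)"
  have "real k \<le> real k ^ (t + 2)"
    using assms by (intro self_le_power) auto
  then have "real k - 1 \<le> real k ^ (t + 2)"
    by linarith
  then have "-1 \<le> x"
    using assms by (simp add: x_def field_simps)
  have "n - t - 2 + (t + 2) = n"
    using assms by simp
  then have "real k ^ n = real k ^ (n - t - 2) * real k ^ (t + 2)"
    by (metis power_add)
  then have "real k ^ n - real n * (real k - 1) * real k ^ (n - t - 2) = real k ^ n * (1 + real n * x)"
    using assms by (simp add: x_def field_simps)
  also have "\<dots> \<le> real k ^ n * (1 + x) ^ n"
    using Bernoulli_inequality[OF \<open>-1 \<le> x\<close>] by (intro mult_left_mono) simp_all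
  also have "\<dots> = (real k * (1 + x)) ^ n"
    by (simp add: power_mult_distrib)
  also have "real k * (1 + x) = beta k t"
    using assms by (simp add: beta_eq x_def field_simps)
  finally show ?thesis .
qed

theorem lemma13:
  fixes k t n :: nat
  assumes "k \<ge> 2" and "t \<ge> 2" and "2 * t \<le> n" and "n \<le> 3 * t"
  shows "real (avoid_count k n (replicate t 0)) \<le> beta k t ^ n"
proof -
  let ?C = "{w \<in> words k n. sublist (replicate t 0) w}"
  have "n * (k - 1) * k ^ (n - t - 2) \<le> card ?C"
    using assms by (rule card_words_containing_zero_run_ge)
  then have "real (n * (k - 1) * k ^ (n - t - 2)) \<le> real (card ?C)"
    by (rule of_nat_mono)
  then have "real n * (real k - 1) * real k ^ (n - t - 2) \<le> real (card ?C)"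
    using assms by (simp add: of_nat_diff)
  moreover have "card ?C \<le> k ^ n"
    by (auto simp flip: card_words intro: card_mono finite_words)
  ultimately have "real (avoid_count k n (replicate t 0)) \<le> real k ^ n - real n * (real k - 1) * real k ^ (n - t - 2)"
    by (simp add: avoid_count_eq of_nat_diff)
  also have "\<dots> \<le> beta k t ^ n"
    using assms by (intro power_minus_le_beta_power) auto
  finally show ?thesis .
qed

end
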